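(* Let $\mathbf{X}_-\in\mathbb{R}^{n\times T}$, $\mathbf{U}_-\in\mathbb{R}^{m\times T}$, $\mathbf{X}_+\in\mathbb{R}^{n\times T}$ be data generated by $\mathbf{X}_+=A_\ast\mathbf{X}_-+B_\ast\mathbf{U}_-+\mathbf{W}_-$ for some (unknown) $A_\ast\in\mathbb{R}^{n\times n}$, $B_\ast\in\mathbb{R}^{n\times m}$ and noise matrix $\mathbf{W}_-\in\mathbb{R}^{n\times T}$ satisfying \[ \begin{bmatrix} I\\ \mathbf{W}_-^\top\end{bmatrix}^\top\begin{bmatrix}\Phi_{11}&\Phi_{12}\\ \Phi_{12}^\top&\Phi_{22}\end{bmatrix}\begin{bmatrix} I\\ \mathbf{W}_-^\top\end{bmatrix}\succeq 0 \] for some $\Phi\in\mathbb{S}^{n+T}$ with $\Phi_{11}\succeq 0$ and $\Phi_{22}\prec 0$. Let $C\in\mathbb{R}^{q\times n}$, $D\in\mathbb{R}^{q\times m}$, $E\in\mathbb{R}^{n\times z}$, and let $\mathcal{S}\subseteq\mathbb{R}^{m\times n}$ be a subspace with representation matrix $S$. Consider the semidefinite program: minimize (infimize) $\gamma$ over $P\in\mathbb{S}^n$, $Q\in\mathbb{S}^q$, $R\in\Upsilon(S)$, $L\in\mathcal{S}$, $\alpha,\beta,\gamma\in\mathbb{R}$ subject to \[ \begin{bmatrix} P-EE^\top-\beta I & \mathbf{0} & \mathbf{0} & \mathbf{0}\\ \mathbf{0} & \mathbf{0} & \mathbf{0} & R\\ \mathbf{0} & \mathbf{0} & \mathbf{0}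 & L\\ \mathbf{0} & R^\top & L^\top & R+R^\top-P \end{bmatrix}-\alpha\begin{bmatrix}\Psi & \mathbf{0}\\ \mathbf{0} & \mathbf{0}\end{bmatrix}\succeq 0, \] \[ \begin{bmatrix} Q & CR+DL\\ (CR+DL)^\top & R+R^\top-P\end{bmatrix}\succeq 0,\qquad \operatorname{Tr}(Q)\le\gamma^2,\qquad \alpha\ge 0,\ \beta>0,\ \gamma\ge 0, \] where in the first matrix the block rows/columns have sizes $n,n,m,n$ and $\Psi\in\mathbb{S}^{2n+m}$ occupies the first three block rows/columns. If this program is feasible with optimal value $\gamma^\ast$ (attained by $(P,Q,R,L,\alpha,\beta,\gamma^\ast)$), then $K=LR^{-1}\in\mathcal{S}$ is a $\gamma^\ast$-suboptimal $H_2$ controller for every system $(A,B)\in\Sigma_{\mathcal{D}}$, i.e. for every system $x(t+1)=Ax(t)+Bu(t)+E\xi(t)$, $y(t)=Cx(t)+Du(t)$ with $(A,B)\in\Sigma_{\mathcal{D}}$.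
   Context: $\mathbb{S}^n$ denotes real symmetric $n\times n$ matrices. For a system $x(t+1)=Ax(t)+Bu(t)+E\xi(t)$, $y(t)=Cx(t)+Du(t)$ and a static feedback $u=Kx$, let $G_K(z)$ be the transfer function from $\xi$ to $y$ of the closed loop $x(t+1)=(A+BK)x(t)+E\xi(t)$, $y(t)=(C+DK)x(t)$; $K$ is a $\gamma$-suboptimal $H_2$ controller if $\|G_K(z)\|_{H_2}\le\gamma$. If $S_1,\dots,S_k\in\mathbb{R}^{m\times n}$ form a basis of $\mathcal{S}$, $S=[S_1\ \cdots\ S_k]\in\mathbb{R}^{m\times nk}$ is a representation matrix of $\mathcal{S}$, and $\Upsilon(S):=\{R\in\mathbb{R}^{n\times n}\mid\exists\Lambda\in\mathbb{S}^k:\ S(I_k\otimes R)=S(\Lambda\otimes I_n)\}$ ($\otimes$ the Kronecker product). Define \[ \Psi:=\begin{bmatrix} I & \mathbf{X}_+\\ \mathbf{0} & -\mathbf{X}_-\\ \mathbf{0} & -\mathbf{U}_-\end{bmatrix}^\top\Phi\begin{bmatrix} I & \mathbf{X}_+\\ \mathbf{0} & -\mathbf{X}_-\\ \mathbf{0} & -\mathbf{U}_-\end{bmatrix}\in\mathbb{S}^{2n+m}, \] and $\Sigma_{\mathcal{D}}:=\{(A,B)\mid [I\ \ A\ \ B]\,\Psi\,[I\ \ A\ \ B]^\top\succeq 0\}$, i.e. the set of $(A,B)\in\mathbb{R}^{n\times n}\times\mathbb{R}^{n\times m}$ with $\begin{bmatrix} I\\ A^\top\\ B^\top\end{bmatrix}^\top\Psi\begin{bmatrix}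 I\\ A^\top\\ B^\top\end{bmatrix}\succeq 0$. *)

theory Defs
  imports "Jordan_Normal_Form.Gauss_Jordan_Elimination"
begin

definition sym_mat :: "nat \<Rightarrow> real mat \<Rightarrow> bool" where
  "sym_mat n M \<longleftrightarrow> M \<in> carrier_mat n n \<and> transpose_mat M = M"

definition psd :: "nat \<Rightarrow> real mat \<Rightarrow> bool" where
  "psd n M \<longleftrightarrow> sym_mat n M \<and> (\<forall>v \<in> carrier_vec n. v \<bullet> (M *\<^sub>v v) \<ge> 0)"

definition neg_def :: "nat \<Rightarrow> real mat \<Rightarrow> bool" where
  "neg_def n M \<longleftrightarrow> sym_mat n M \<and> (\<forall>v \<in> carrier_vec n. v \<noteq> 0\<^sub>v n \<longrightarrow> v \<bullet> (M *\<^sub>v v) < 0)"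

definition trace_mat :: "real mat \<Rightarrow> real" where
  "trace_mat M = (\<Sum>i<dim_row M. M $$ (i, i))"

definition append_cols :: "real mat \<Rightarrow> real mat \<Rightarrow> real mat" where
  "append_cols A B = four_block_mat A B (0\<^sub>m 0 (dim_col A)) (0\<^sub>m 0 (dim_col B))"

definition kron :: "real mat \<Rightarrow> real mat \<Rightarrow> real mat" where
  "kron A B = mat (dim_row A * dim_row B) (dim_col A * dim_col B)
     (\<lambda>(i, j). A $$ (i div dim_row B, j div dim_col B) * B $$ (i mod dim_row B, j mod dim_col B))"

definition frob_sq :: "real mat \<Rightarrow> real" where
  "frob_sq M = (\<Sum>i<dim_row M. \<Sum>j<dim_col M. (M $$ (i, j))\<^sup>2)"

text \<open>Closed loop x(t+1) = (A+BK)x(t) + E xi(t), y(t) = (C+DK)x(t).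
  Its transfer function G_K(z) = (C+DK)(zI-(A+BK))^{-1}E has impulse response
  (Markov parameters) G_0 = 0, G_{t+1} = (C+DK)(A+BK)^t E.  The H2 norm is the
  l2 norm of the impulse response (equal to the frequency-domain H2 norm by Parseval);
  it is infinite when the impulse response is not square summable.\<close>
definition markov :: "real mat \<Rightarrow> real mat \<Rightarrow> real mat \<Rightarrow> real mat \<Rightarrow> real mat \<Rightarrow> real mat \<Rightarrow> nat \<Rightarrow> real mat" where
  "markov A B C D E K t = (C + D * K) * ((A + B * K) ^\<^sub>m t) * E"

definition h2_finite :: "real mat \<Rightarrow> real mat \<Rightarrow> real mat \<Rightarrow> real mat \<Rightarrow> real mat \<Rightarrow> real mat \<Rightarrow> bool" where
  "h2_finite A B C D E K \<longleftrightarrow> summable (\<lambda>t. frob_sq (markov A B C D E K t))"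

definition h2_norm :: "real mat \<Rightarrow> real mat \<Rightarrow> real mat \<Rightarrow> real mat \<Rightarrow> real mat \<Rightarrow> real mat \<Rightarrow> real" where
  "h2_norm A B C D E K = sqrt (\<Sum>t. frob_sq (markov A B C D E K t))"

definition h2_suboptimal :: "real mat \<Rightarrow> real mat \<Rightarrow> real mat \<Rightarrow> real mat \<Rightarrow> real mat \<Rightarrow> real mat \<Rightarrow> real \<Rightarrow> bool" where
  "h2_suboptimal A B C D E K \<gamma> \<longleftrightarrow> h2_finite A B C D E K \<and> h2_norm A B C D E K \<le> \<gamma>"

definition mat_span :: "nat \<Rightarrow> (nat \<Rightarrow> real mat) \<Rightarrow> nat \<Rightarrow> nat \<Rightarrow> real mat set" where
  "mat_span k Ss m n = {M. M \<in> carrier_mat m n \<and>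
      (\<exists>c :: nat \<Rightarrow> real. M = mat m n (\<lambda>(i, j). \<Sum>l<k. c l * Ss l $$ (i, j)))}"

definition mat_lin_indep :: "nat \<Rightarrow> (nat \<Rightarrow> real mat) \<Rightarrow> nat \<Rightarrow> nat \<Rightarrow> bool" where
  "mat_lin_indep k Ss m n \<longleftrightarrow> (\<forall>c :: nat \<Rightarrow> real.
      mat m n (\<lambda>(i, j). \<Sum>l<k. c l * Ss l $$ (i, j)) = 0\<^sub>m m n \<longrightarrow> (\<forall>l<k. c l = 0))"

definition is_basis_of :: "nat \<Rightarrow> (nat \<Rightarrow> real mat) \<Rightarrow> nat \<Rightarrow> nat \<Rightarrow> real mat set \<Rightarrow> bool" where
  "is_basis_of k Ss m n \<S> \<longleftrightarrow> (\<forall>l<k. Ss l \<in> carrier_mat m n) \<and> mat_lin_indep k Ss m n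
      \<and> \<S> = mat_span k Ss m n"

definition rep_mat :: "nat \<Rightarrow> (nat \<Rightarrow> real mat) \<Rightarrow> nat \<Rightarrow> nat \<Rightarrow> real mat" where
  "rep_mat k Ss m n = mat m (n * k) (\<lambda>(i, j). Ss (j div n) $$ (i, j mod n))"

definition Upsilon :: "nat \<Rightarrow> nat \<Rightarrow> real mat \<Rightarrow> real mat set" where
  "Upsilon k n S = {R. R \<in> carrier_mat n n \<and>
      (\<exists>\<Lambda>. sym_mat k \<Lambda> \<and> S * kron (1\<^sub>m k) R = S * kron \<Lambda> (1\<^sub>m n))}"

definition Psi_mat :: "nat \<Rightarrow> nat \<Rightarrow> nat \<Rightarrow> real mat \<Rightarrow> real mat \<Rightarrow> real mat \<Rightarrow> real mat \<Rightarrow> real mat" where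
  "Psi_mat n m T Xp Xm Um \<Phi> =
     (let M = append_cols (1\<^sub>m n) Xp @\<^sub>r append_cols (0\<^sub>m n n) (- Xm) @\<^sub>r append_cols (0\<^sub>m m n) (- Um)
      in M * \<Phi> * transpose_mat M)"

definition Sigma_D :: "nat \<Rightarrow> nat \<Rightarrow> real mat \<Rightarrow> (real mat \<times> real mat) set" where
  "Sigma_D n m \<Psi> = {(A, B). A \<in> carrier_mat n n \<and> B \<in> carrier_mat n m \<and>
      (let N = append_cols (append_cols (1\<^sub>m n) A) B in psd n (N * \<Psi> * transpose_mat N))}"

definition sdp_feasible ::
  "nat \<Rightarrow> nat \<Rightarrow> nat \<Rightarrow> nat \<Rightarrow> real mat \<Rightarrow> real mat \<Rightarrow> real mat \<Rightarrow> real mat \<Rightarrow> real mat set \<Rightarrow> real mat \<Rightarrow>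
   real mat \<Rightarrow> real mat \<Rightarrow> real mat \<Rightarrow> real mat \<Rightarrow> real \<Rightarrow> real \<Rightarrow> real \<Rightarrow> bool" where
  "sdp_feasible n m q k C D E \<Psi> \<S> S P Q R L \<alpha> \<beta> \<gamma> \<longleftrightarrow>
     sym_mat n P \<and> sym_mat q Q \<and> R \<in> Upsilon k n S \<and> L \<in> \<S> \<and>
     (let Z = R + transpose_mat R - P;
          TL = four_block_mat (P - E * transpose_mat E - \<beta> \<cdot>\<^sub>m 1\<^sub>m n) (0\<^sub>m n (n + m))
                              (0\<^sub>m (n + m) n) (0\<^sub>m (n + m) (n + m));
          Col = 0\<^sub>m n n @\<^sub>r R @\<^sub>r L;
          Big = four_block_mat TL Col (transpose_mat Col) Z;
          PsiBig = four_block_mat \<Psi> (0\<^sub>m (2 * n + m) n) (0\<^sub>m n (2 * n + m)) (0\<^sub>m n n);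
          CL = C * R + D * L
      in psd (3 * n + m) (Big - \<alpha> \<cdot>\<^sub>m PsiBig) \<and>
         psd (q + n) (four_block_mat Q CL (transpose_mat CL) Z)) \<and>
     trace_mat Q \<le> \<gamma>\<^sup>2 \<and> \<alpha> \<ge> 0 \<and> \<beta> > 0 \<and> \<gamma> \<ge> 0"

end

theory Submission
  imports Defs "Jordan_Normal_Form.Determinant"
begin

(* Write Z = R + R^T - P. For (A, B) in Sigma_D, testing the first LMI against (x, A^T x, B^T x, w)
   lets its Psi-term be dropped and leaves
     |E^T x|^2 + beta |x|^2 <= x^T P x + 2 x^T (A R + B L) w + w^T Z w,
   while the second LMI gives 0 <= y^T Q y + 2 y^T (C R + D L) w + w^T Z w.
   The true system lies in Sigma_D, so P is positive definite (take w = 0), and R is invertible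
   (take x = 0 and R w = 0). With K = L R^-1 we have A R + B L = (A + B K) R, and eliminating w
   via Z <= R^T P^-1 R yields (A + B K) P (A + B K)^T + E E^T <= P and
   (C + D K) P (C + D K)^T <= Q. Iterating the first inequality bounds the Gramian of the impulse
   response by P, so the squared H2 norm is at most tr Q <= gamma^2. Finally, R in Upsilon(S)
   means that right multiplication by R maps S into itself; being injective it is onto, so
   K = L R^-1 lies in S. *)

abbreviation quad_form :: "real mat \<Rightarrow> real vec \<Rightarrow> real" where
  "quad_form M v \<equiv> v \<bullet> (M *\<^sub>v v)"

lemma zero_mat_mult_vec[simp]: "v \<in> carrier_vec nc \<Longrightarrow> 0\<^sub>m nr nc *\<^sub>v v = 0\<^sub>v nr"
  by (intro eq_vecI) auto

lemma mult_mat_vec_zero[simp]: "A \<in> carrier_mat nr nc \<Longrightarrow> A *\<^sub>v 0\<^sub>v nc = 0\<^sub>v nr"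
  by (intro eq_vecI) auto

lemma mult_mat_vec_uminus:
  "A \<in> carrier_mat nr nc \<Longrightarrow> v \<in> carrier_vec nc \<Longrightarrow> A *\<^sub>v (- v) = - (A *\<^sub>v v)"
  for A :: "'a :: ring mat"
  by (intro eq_vecI) auto

lemma pow_mat_Suc_left:
  assumes "G \<in> carrier_mat n n"
  shows "G ^\<^sub>m Suc t = G * G ^\<^sub>m t"
proof (induction t)
  case 0
  then show ?case using assms by simp
next
  case (Suc t)
  have "G ^\<^sub>m Suc (Suc t) = (G * G ^\<^sub>m t) * G" using Suc by simp
  also have "\<dots> = G * (G ^\<^sub>m t * G)" using assms by (simp add: assoc_mult_mat[of _ n n _ n _ n])
  finally show ?case by simp
qed

lemma carrier_append_cols[simp, intro]:
  "X \<in> carrier_mat r c1 \<Longrightarrow> Y \<in> carrier_mat r c2 \<Longrightarrow> append_cols X Y \<in> carrier_mat r (c1 + c2)"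
  unfolding append_cols_def by auto

lemma append_cols_assoc:
  assumes "X \<in> carrier_mat r c1" "Y \<in> carrier_mat r c2" "Z \<in> carrier_mat r c3"
  shows "append_cols (append_cols X Y) Z = append_cols X (append_cols Y Z)"
  using assms unfolding append_cols_def by (intro eq_matI) auto

lemma append_cols_add:
  assumes "X \<in> carrier_mat r c1" "X' \<in> carrier_mat r c1" "Y \<in> carrier_mat r c2" "Y' \<in> carrier_mat r c2"
  shows "append_cols X Y + append_cols X' Y' = append_cols (X + X') (Y + Y')"
  using assms unfolding append_cols_def by (intro eq_matI) auto

lemma mult_append_cols:
  assumes "M \<in> carrier_mat r s" "X \<in> carrier_mat s c1" "Y \<in> carrier_mat s c2"
  shows "M * append_cols X Y = append_cols (M * X) (M * Y)"
  using assms unfolding append_cols_def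
  by (intro eq_matI) (auto simp: col_def intro!: arg_cong[of _ _ "scalar_prod _"])

lemma append_cols_mult_append_rows:
  assumes "X \<in> carrier_mat r c1" "Y \<in> carrier_mat r c2" "U \<in> carrier_mat c1 c" "V \<in> carrier_mat c2 c"
  shows "append_cols X Y * (U @\<^sub>r V) = X * U + Y * V"
  using assms unfolding append_cols_def append_rows_def
  by (subst mult_four_block_mat) auto

lemma transpose_append_cols:
  assumes "X \<in> carrier_mat r c1" "Y \<in> carrier_mat r c2"
  shows "transpose_mat (append_cols X Y) = transpose_mat X @\<^sub>r transpose_mat Y"
  using assms unfolding append_cols_def append_rows_def
  by (subst transpose_four_block_mat[of _ r c1 _ c2 _ 0]) auto

lemma congruence_mult:
  fixes N M G :: "real mat"
  assumes "N \<in> carrier_mat a b" "M \<in> carrier_mat b c" "G \<in> carrier_mat c c"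
  shows "N * (M * G * transpose_mat M) * transpose_mat N = (N * M) * G * transpose_mat (N * M)"
proof -
  have "(N * M) * G * transpose_mat (N * M) = N * (M * G) * (transpose_mat M * transpose_mat N)"
    using assms by (simp add: transpose_mult[of N a b M c] assoc_mult_mat[of N a b M c G c])
  also have "\<dots> = N * (M * G) * transpose_mat M * transpose_mat N"
    using assms by (simp add: assoc_mult_mat[of "N * (M * G)" a c "transpose_mat M" b "transpose_mat N" a])
  also have "\<dots> = N * (M * G * transpose_mat M) * transpose_mat N"
    using assms by (simp add: assoc_mult_mat[of N a b "M * G" c "transpose_mat M" b])
  finally show ?thesis by simp
qed

lemma quad_form_congruence:
  assumes "M \<in> carrier_mat a b" "G \<in> carrier_mat b b" "x \<in> carrier_vec a"
  shows "quad_form (M * G * transpose_mat M) x = quad_form G (transpose_mat M *\<^sub>v x)"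
  using assms transpose_vec_mult_scalar[of M a b "G *\<^sub>v (transpose_mat M *\<^sub>v x)" x]
  by (simp add: assoc_mult_mat_vec[of _ a b _ a])

lemma quad_form_four_block_mat:
  fixes A B D :: "real mat"
  assumes "A \<in> carrier_mat n1 n1" "B \<in> carrier_mat n1 n2" "D \<in> carrier_mat n2 n2"
    and "a \<in> carrier_vec n1" "d \<in> carrier_vec n2"
  shows "quad_form (four_block_mat A B (transpose_mat B) D) (a @\<^sub>v d)
    = quad_form A a + 2 * (a \<bullet> (B *\<^sub>v d)) + quad_form D d"
proof -
  have "d \<bullet> (transpose_mat B *\<^sub>v a) = a \<bullet> (B *\<^sub>v d)"
    using transpose_vec_mult_scalar[OF assms(2,5,4)] assms by (simp add: comm_scalar_prod[of _ n2])
  then show ?thesis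
    using assms by (simp add: four_block_mat_mult_vec[of _ n1 n1 _ n2 _ n2] scalar_prod_append[of _ n1 _ n2]
        scalar_prod_add_distrib[of _ n1] scalar_prod_add_distrib[of _ n2])
qed

lemma quad_form_diff_smult:
  fixes M1 M2 :: "real mat"
  assumes "M1 \<in> carrier_mat d d" "M2 \<in> carrier_mat d d" "v \<in> carrier_vec d"
  shows "quad_form (M1 - \<alpha> \<cdot>\<^sub>m M2) v = quad_form M1 v - \<alpha> * quad_form M2 v"
proof -
  have "(\<alpha> \<cdot>\<^sub>m M2) *\<^sub>v v = \<alpha> \<cdot>\<^sub>v (M2 *\<^sub>v v)"
    using assms by (intro eq_vecI) auto
  then show ?thesis
    using assms by (simp add: minus_mult_distrib_mat_vec[of _ d d] scalar_prod_minus_distrib[of _ d])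
qed

lemma quad_form_minus_gram:
  fixes P E :: "real mat"
  assumes "P \<in> carrier_mat n n" "E \<in> carrier_mat n z" "x \<in> carrier_vec n"
  shows "quad_form (P - E * transpose_mat E - \<beta> \<cdot>\<^sub>m 1\<^sub>m n) x
    = quad_form P x - (transpose_mat E *\<^sub>v x) \<bullet> (transpose_mat E *\<^sub>v x) - \<beta> * (x \<bullet> x)"
proof -
  have EE: "E * transpose_mat E \<in> carrier_mat n n" using assms by auto
  have "(P - E * transpose_mat E - \<beta> \<cdot>\<^sub>m 1\<^sub>m n) *\<^sub>v x
      = (P - E * transpose_mat E) *\<^sub>v x - (\<beta> \<cdot>\<^sub>m 1\<^sub>m n) *\<^sub>v x"
    using assms EE by (intro minus_mult_distrib_mat_vec[of _ n n]) auto
  also have "(P - E * transpose_mat E) *\<^sub>v x = P *\<^sub>v x - (E * transpose_mat E) *\<^sub>v x"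
    using assms EE by (intro minus_mult_distrib_mat_vec[of _ n n]) auto
  also have "(\<beta> \<cdot>\<^sub>m 1\<^sub>m n) *\<^sub>v x = \<beta> \<cdot>\<^sub>v x"
    using assms by (intro eq_vecI) auto
  finally have "(P - E * transpose_mat E - \<beta> \<cdot>\<^sub>m 1\<^sub>m n) *\<^sub>v x
      = P *\<^sub>v x - (E * transpose_mat E) *\<^sub>v x - \<beta> \<cdot>\<^sub>v x" .
  moreover have "quad_form (E * transpose_mat E) x = (transpose_mat E *\<^sub>v x) \<bullet> (transpose_mat E *\<^sub>v x)"
    using quad_form_congruence[OF assms(2) one_carrier_mat assms(3)] assms by simp
  ultimately show ?thesis
    using assms EE by (simp add: scalar_prod_minus_distrib[of _ n])
qed

lemma mat_inverse_of_trivial_kernel: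
  fixes A :: "'a :: field mat"
  assumes A: "A \<in> carrier_mat n n"
    and kernel: "\<And>v. v \<in> carrier_vec n \<Longrightarrow> A *\<^sub>v v = 0\<^sub>v n \<Longrightarrow> v = 0\<^sub>v n"
  obtains B where "mat_inverse A = Some B" "A * B = 1\<^sub>m n" "B * A = 1\<^sub>m n" "B \<in> carrier_mat n n"
proof (cases "mat_inverse A")
  case None
  have "det A \<noteq> 0"
    using kernel det_0_iff_vec_prod_zero[OF A] by blast
  then show ?thesis
    using mat_inverse(1)[OF A None, where b = "()"] det_non_zero_imp_unit[OF A, where b = "()"] by blast
next
  case (Some B)
  then show ?thesis using mat_inverse(2)[OF A Some] that by blast
qed

lemma Psi_mat_carrier:
  assumes "Xp \<in> carrier_mat n T" "Xm \<in> carrier_mat n T" "Um \<in> carrier_mat m T"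
    and "\<Phi> \<in> carrier_mat (n + T) (n + T)"
  shows "Psi_mat n m T Xp Xm Um \<Phi> \<in> carrier_mat (2 * n + m) (2 * n + m)"
proof -
  have "append_cols (1\<^sub>m n) Xp @\<^sub>r append_cols (0\<^sub>m n n) (- Xm) @\<^sub>r append_cols (0\<^sub>m m n) (- Um)
      \<in> carrier_mat (2 * n + m) (n + T)"
    using assms carrier_append_rows by (metis add.assoc carrier_append_cols mult_2 one_carrier_mat
        uminus_carrier_mat zero_carrier_mat)
  then show ?thesis using assms(4) unfolding Psi_mat_def Let_def by auto
qed

text \<open>With \<Psi> = M \<Phi> M^T for M = [I X+; 0 -X-; 0 -U-], the data equation says exactly
  [I A* B*] M = [I W-], so the noise bound is membership of (A*, B*) in \<Sigma>_D.\<close>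
lemma true_system_in_Sigma_D:
  assumes data: "Xm \<in> carrier_mat n T" "Um \<in> carrier_mat m T" "Xp \<in> carrier_mat n T"
    and truesys: "Ast \<in> carrier_mat n n" "Bst \<in> carrier_mat n m" "Wm \<in> carrier_mat n T"
      "Xp = Ast * Xm + Bst * Um + Wm"
    and \<Phi>: "\<Phi> \<in> carrier_mat (n + T) (n + T)"
    and noise: "psd n (append_cols (1\<^sub>m n) Wm * \<Phi> * transpose_mat (append_cols (1\<^sub>m n) Wm))"
  shows "(Ast, Bst) \<in> Sigma_D n m (Psi_mat n m T Xp Xm Um \<Phi>)"
proof -
  let ?X1 = "append_cols (1\<^sub>m n) Xp" and ?X2 = "append_cols (0\<^sub>m n n) (- Xm)"
    and ?X3 = "append_cols (0\<^sub>m m n) (- Um)"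
  let ?M = "?X1 @\<^sub>r ?X2 @\<^sub>r ?X3"
  let ?N = "append_cols (append_cols (1\<^sub>m n) Ast) Bst"
  have X1: "?X1 \<in> carrier_mat n (n + T)" and X2: "?X2 \<in> carrier_mat n (n + T)"
    and X3: "?X3 \<in> carrier_mat m (n + T)" using data by auto
  have X23: "?X2 @\<^sub>r ?X3 \<in> carrier_mat (n + m) (n + T)" using X2 X3 by auto
  have M: "?M \<in> carrier_mat (n + (n + m)) (n + T)" using X1 X23 by auto
  have N: "?N \<in> carrier_mat n (n + (n + m))"
    using carrier_append_cols[OF carrier_append_cols[OF one_carrier_mat truesys(1)] truesys(2)]
    by (simp add: add.assoc)
  have "?N * ?M = 1\<^sub>m n * ?X1 + (Ast * ?X2 + Bst * ?X3)"
    using append_cols_mult_append_rows[OF one_carrier_mat carrier_append_cols[OF truesys(1,2)] X1 X23]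
      append_cols_mult_append_rows[OF truesys(1,2) X2 X3] append_cols_assoc[OF one_carrier_mat truesys(1,2)]
    by simp
  also have "\<dots> = append_cols (1\<^sub>m n) (Xp + (- (Ast * Xm) + - (Bst * Um)))"
  proof -
    have "Ast * ?X2 = append_cols (0\<^sub>m n n) (- (Ast * Xm))"
      using data truesys(1) by (simp add: mult_append_cols[of _ n n _ n _ T])
    moreover have "Bst * ?X3 = append_cols (0\<^sub>m n n) (- (Bst * Um))"
      using data truesys(2) by (simp add: mult_append_cols[of _ n m _ n _ T])
    ultimately show ?thesis
      using data truesys(1,2) by (simp add: left_mult_one_mat[OF X1] append_cols_add[of _ n n _ _ T])
  qed
  also have "Xp + (- (Ast * Xm) + - (Bst * Um)) = Wm"
    using data truesys by (intro eq_matI) auto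
  finally have "?N * Psi_mat n m T Xp Xm Um \<Phi> * transpose_mat ?N
      = append_cols (1\<^sub>m n) Wm * \<Phi> * transpose_mat (append_cols (1\<^sub>m n) Wm)"
    unfolding Psi_mat_def Let_def using congruence_mult[OF N M \<Phi>] by simp
  then show ?thesis using noise truesys unfolding Sigma_D_def by simp
qed

lemma transpose_system_mat_mult_vec:
  fixes A B :: "real mat"
  assumes "A \<in> carrier_mat n n" "B \<in> carrier_mat n m" "x \<in> carrier_vec n"
  shows "transpose_mat (append_cols (append_cols (1\<^sub>m n) A) B) *\<^sub>v x
    = x @\<^sub>v (transpose_mat A *\<^sub>v x) @\<^sub>v (transpose_mat B *\<^sub>v x)"
  using assms
  by (simp add: append_cols_assoc[of _ n n _ n _ m] transpose_append_cols[of _ n n _ "n + m"]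
      transpose_append_cols[of _ n n _ m] mat_mult_append[of _ n n _ "n + m"] mat_mult_append[of _ n n _ m])

lemma Sigma_D_quad_form_nonneg:
  assumes "(A, B) \<in> Sigma_D n m \<Psi>" "\<Psi> \<in> carrier_mat (2 * n + m) (2 * n + m)" "x \<in> carrier_vec n"
  shows "0 \<le> quad_form \<Psi> (x @\<^sub>v (transpose_mat A *\<^sub>v x) @\<^sub>v (transpose_mat B *\<^sub>v x))"
proof -
  let ?N = "append_cols (append_cols (1\<^sub>m n) A) B"
  from assms(1) have A: "A \<in> carrier_mat n n" and B: "B \<in> carrier_mat n m"
    and psd: "psd n (?N * \<Psi> * transpose_mat ?N)"
    unfolding Sigma_D_def Let_def by auto
  have N: "?N \<in> carrier_mat n (2 * n + m)"
    using carrier_append_cols[OF carrier_append_cols[OF one_carrier_mat A] B] by (simp add: mult_2)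
  have "0 \<le> quad_form (?N * \<Psi> * transpose_mat ?N) x"
    using psd assms(3) unfolding psd_def by blast
  then show ?thesis
    using quad_form_congruence[OF N assms(2,3)] transpose_system_mat_mult_vec[OF A B assms(3)] by simp
qed

section \<open>Lyapunov bounds on the H2 norm\<close>

text \<open>Testing with w = -R^-1 P v is the dilation bound R + R^T - P \<preceq> R^T P^-1 R in disguise,
  without ever inverting P.\<close>
lemma quad_form_le_of_dilation:
  fixes P R Ri M :: "real mat"
  assumes P: "psd n P" and R: "R \<in> carrier_mat n n" "Ri \<in> carrier_mat n n" "R * Ri = 1\<^sub>m n"
    and M: "M \<in> carrier_mat p n" and y: "y \<in> carrier_vec p"
    and ineq: "\<And>w. w \<in> carrier_vec n \<Longrightarrow>
      0 \<le> c + 2 * (y \<bullet> ((M * R) *\<^sub>v w)) + quad_form (R + transpose_mat R - P) w"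
  shows "quad_form P (transpose_mat M *\<^sub>v y) \<le> c"
proof -
  define v where "v = transpose_mat M *\<^sub>v y"
  define w where "w = - (Ri *\<^sub>v (P *\<^sub>v v))"
  have Pc: "P \<in> carrier_mat n n" and Psym: "transpose_mat P = P"
    and Pnonneg: "\<And>u. u \<in> carrier_vec n \<Longrightarrow> 0 \<le> quad_form P u"
    using P unfolding psd_def sym_mat_def by auto
  have v: "v \<in> carrier_vec n" and Pv: "P *\<^sub>v v \<in> carrier_vec n" and w: "w \<in> carrier_vec n"
    unfolding v_def w_def using M y Pc R by auto
  have Rw: "R *\<^sub>v w = - (P *\<^sub>v v)"
    unfolding w_def using R Pc v by (simp add: mult_mat_vec_uminus[of R n n] flip: assoc_mult_mat_vec[of R n n Ri n])
  have cross: "y \<bullet> ((M * R) *\<^sub>v w) = - quad_form P v"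
    using Rw M R w y Pv transpose_vec_mult_scalar[OF M Pv y] unfolding v_def
    by (simp add: mult_mat_vec_uminus[OF M])
  have "w \<bullet> (transpose_mat R *\<^sub>v w) = w \<bullet> (R *\<^sub>v w)"
    using transpose_vec_mult_scalar[of "transpose_mat R" n n w w] R w by (simp add: comm_scalar_prod[of _ n])
  then have Zw: "quad_form (R + transpose_mat R - P) w = - 2 * (w \<bullet> (P *\<^sub>v v)) - quad_form P w"
    using R Pc w Rw Pv by (simp add: add_mult_distrib_mat_vec[of _ n n] minus_mult_distrib_mat_vec[of _ n n]
        scalar_prod_add_distrib[of _ n] scalar_prod_minus_distrib[of _ n])
  have "v \<bullet> (P *\<^sub>v w) = w \<bullet> (P *\<^sub>v v)"
    using transpose_vec_mult_scalar[OF Pc w v] Psym Pc v w by (simp add: comm_scalar_prod[of _ n])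
  then have "quad_form P (w + v) = quad_form P w + 2 * (w \<bullet> (P *\<^sub>v v)) + quad_form P v"
    using Pc v w by (simp add: mult_add_distrib_mat_vec[OF Pc] scalar_prod_add_distrib[of _ n]
        add_scalar_prod_distrib[of _ n])
  then have "0 \<le> quad_form P w + 2 * (w \<bullet> (P *\<^sub>v v)) + quad_form P v"
    using Pnonneg[of "w + v"] v w by simp
  with ineq[OF w] cross Zw show ?thesis
    unfolding v_def by linarith
qed

text \<open>The hypothesis lyap is G P G^T + E E^T \<preceq> P; iterating it bounds the partial sums of
  G^t E E^T (G^T)^t by P.\<close>
lemma gramian_partial_sum_le:
  fixes P G E :: "real mat"
  assumes P: "psd n P" and G: "G \<in> carrier_mat n n" and E: "E \<in> carrier_mat n z"
    and lyap: "\<And>x. x \<in> carrier_vec n \<Longrightarrow>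
      quad_form P (transpose_mat G *\<^sub>v x) + (transpose_mat E *\<^sub>v x) \<bullet> (transpose_mat E *\<^sub>v x) \<le> quad_form P x"
    and y: "y \<in> carrier_vec n"
  shows "(\<Sum>t<N. (transpose_mat (G ^\<^sub>m t * E) *\<^sub>v y) \<bullet> (transpose_mat (G ^\<^sub>m t * E) *\<^sub>v y)) \<le> quad_form P y"
  using y
proof (induction N arbitrary: y)
  case 0
  then show ?case using P unfolding psd_def by simp
next
  case (Suc N)
  have shift: "transpose_mat (G ^\<^sub>m Suc t * E) *\<^sub>v y = transpose_mat (G ^\<^sub>m t * E) *\<^sub>v (transpose_mat G *\<^sub>v y)"
    for t
  proof -
    have GtE: "G ^\<^sub>m t * E \<in> carrier_mat n z" using G E by auto
    have "G ^\<^sub>m Suc t * E = G * (G ^\<^sub>m t * E)"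
      unfolding pow_mat_Suc_left[OF G] using G E by (intro assoc_mult_mat[of _ n n _ n _ z]) auto
    then have "transpose_mat (G ^\<^sub>m Suc t * E) = transpose_mat (G ^\<^sub>m t * E) * transpose_mat G"
      using transpose_mult[OF G GtE] by (simp only:)
    then show ?thesis
      using G GtE Suc.prems by simp
  qed
  have "(\<Sum>t<Suc N. (transpose_mat (G ^\<^sub>m t * E) *\<^sub>v y) \<bullet> (transpose_mat (G ^\<^sub>m t * E) *\<^sub>v y))
      = (transpose_mat E *\<^sub>v y) \<bullet> (transpose_mat E *\<^sub>v y)
        + (\<Sum>t<N. (transpose_mat (G ^\<^sub>m t * E) *\<^sub>v (transpose_mat G *\<^sub>v y))
            \<bullet> (transpose_mat (G ^\<^sub>m t * E) *\<^sub>v (transpose_mat G *\<^sub>v y)))"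
    unfolding sum.lessThan_Suc_shift shift using G E by simp
  also have "\<dots> \<le> (transpose_mat E *\<^sub>v y) \<bullet> (transpose_mat E *\<^sub>v y) + quad_form P (transpose_mat G *\<^sub>v y)"
    using Suc.IH[of "transpose_mat G *\<^sub>v y"] G Suc.prems by simp
  also have "\<dots> \<le> quad_form P y"
    using lyap[OF Suc.prems] by simp
  finally show ?case .
qed

lemma frob_sq_nonneg: "0 \<le> frob_sq M"
  unfolding frob_sq_def by (intro sum_nonneg) auto

lemma frob_sq_eq_sum_transpose_unit_vec:
  fixes M :: "real mat"
  assumes "M \<in> carrier_mat q c"
  shows "frob_sq M = (\<Sum>i<q. (transpose_mat M *\<^sub>v unit_vec q i) \<bullet> (transpose_mat M *\<^sub>v unit_vec q i))"
proof -
  have "transpose_mat M *\<^sub>v unit_vec q i = row M i" if "i < q" for i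
    using assms that by (intro eq_vecI) auto
  then show ?thesis
    unfolding frob_sq_def using assms
    by (intro sum.cong) (auto simp: scalar_prod_def power2_eq_square atLeast0LessThan)
qed

lemma markov_partial_sum_le_trace:
  fixes P G E Ck Q :: "real mat"
  assumes P: "psd n P" and G: "G \<in> carrier_mat n n" and E: "E \<in> carrier_mat n z"
    and Ck: "Ck \<in> carrier_mat q n" and Q: "Q \<in> carrier_mat q q"
    and lyap: "\<And>x. x \<in> carrier_vec n \<Longrightarrow>
      quad_form P (transpose_mat G *\<^sub>v x) + (transpose_mat E *\<^sub>v x) \<bullet> (transpose_mat E *\<^sub>v x) \<le> quad_form P x"
    and out: "\<And>y. y \<in> carrier_vec q \<Longrightarrow> quad_form P (transpose_mat Ck *\<^sub>v y) \<le> quad_form Q y"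
  shows "(\<Sum>t<N. frob_sq (Ck * G ^\<^sub>m t * E)) \<le> trace_mat Q"
proof -
  let ?e = "\<lambda>i. transpose_mat Ck *\<^sub>v unit_vec q i"
  have "frob_sq (Ck * G ^\<^sub>m t * E)
      = (\<Sum>i<q. (transpose_mat (G ^\<^sub>m t * E) *\<^sub>v ?e i) \<bullet> (transpose_mat (G ^\<^sub>m t * E) *\<^sub>v ?e i))" for t
  proof -
    have GtE: "G ^\<^sub>m t * E \<in> carrier_mat n z" using G E by auto
    have "Ck * G ^\<^sub>m t * E = Ck * (G ^\<^sub>m t * E)"
      using Ck G E by (intro assoc_mult_mat[of _ q n _ n _ z]) auto
    then have "transpose_mat (Ck * G ^\<^sub>m t * E) = transpose_mat (G ^\<^sub>m t * E) * transpose_mat Ck"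
      using transpose_mult[OF Ck GtE] by (simp only:)
    moreover have "Ck * G ^\<^sub>m t * E \<in> carrier_mat q z" using Ck G E by auto
    ultimately show ?thesis
      using Ck GtE by (simp add: frob_sq_eq_sum_transpose_unit_vec)
  qed
  then have "(\<Sum>t<N. frob_sq (Ck * G ^\<^sub>m t * E))
      = (\<Sum>i<q. \<Sum>t<N. (transpose_mat (G ^\<^sub>m t * E) *\<^sub>v ?e i) \<bullet> (transpose_mat (G ^\<^sub>m t * E) *\<^sub>v ?e i))"
    using sum.swap by simp
  also have "\<dots> \<le> (\<Sum>i<q. quad_form P (?e i))"
    using Ck by (intro sum_mono gramian_partial_sum_le[OF P G E lyap]) auto
  also have "\<dots> \<le> (\<Sum>i<q. Q $$ (i, i))"
  proof (rule sum_mono)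
    fix i assume "i \<in> {..<q}"
    then show "quad_form P (?e i) \<le> Q $$ (i, i)"
      using out[of "unit_vec q i"] Q by simp
  qed
  also have "\<dots> = trace_mat Q"
    using Q unfolding trace_mat_def by simp
  finally show ?thesis .
qed

lemma h2_suboptimal_of_partial_sums_le:
  assumes "\<And>N. (\<Sum>t<N. frob_sq (markov A B C D E K t)) \<le> \<gamma>\<^sup>2" and "0 \<le> \<gamma>"
  shows "h2_suboptimal A B C D E K \<gamma>"
proof -
  have summable: "summable (\<lambda>t. frob_sq (markov A B C D E K t))"
    by (rule summableI_nonneg_bounded[OF frob_sq_nonneg assms(1)])
  then have "(\<Sum>t. frob_sq (markov A B C D E K t)) \<le> \<gamma>\<^sup>2"
    using assms(1) by (rule suminf_le_const)
  then have "h2_norm A B C D E K \<le> sqrt (\<gamma>\<^sup>2)"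
    unfolding h2_norm_def by (rule real_sqrt_le_mono)
  then have "h2_norm A B C D E K \<le> \<gamma>"
    using assms(2) by simp
  then show ?thesis
    unfolding h2_suboptimal_def h2_finite_def using summable by simp
qed

lemma sdp_feasibleD:
  assumes "sdp_feasible n m q k C D E \<Psi> \<S> S P Q R L \<alpha> \<beta> \<gamma>"
  shows "sym_mat n P" "sym_mat q Q" "R \<in> Upsilon k n S" "L \<in> \<S>"
    and "trace_mat Q \<le> \<gamma>\<^sup>2" "0 \<le> \<alpha>" "0 < \<beta>" "0 \<le> \<gamma>"
  using assms unfolding sdp_feasible_def by auto

lemma quad_form_state_lmi:
  fixes X \<Psi> R L Z A B :: "real mat"
  assumes X: "X \<in> carrier_mat n n" and \<Psi>: "\<Psi> \<in> carrier_mat (2 * n + m) (2 * n + m)"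
    and R: "R \<in> carrier_mat n n" and L: "L \<in> carrier_mat m n" and Z: "Z \<in> carrier_mat n n"
    and A: "A \<in> carrier_mat n n" and B: "B \<in> carrier_mat n m"
    and x: "x \<in> carrier_vec n" and w: "w \<in> carrier_vec n"
  shows "quad_form (four_block_mat (four_block_mat X (0\<^sub>m n (n + m)) (0\<^sub>m (n + m) n) (0\<^sub>m (n + m) (n + m)))
        (0\<^sub>m n n @\<^sub>r R @\<^sub>r L) (transpose_mat (0\<^sub>m n n @\<^sub>r R @\<^sub>r L)) Z
      - \<alpha> \<cdot>\<^sub>m four_block_mat \<Psi> (0\<^sub>m (2 * n + m) n) (0\<^sub>m n (2 * n + m)) (0\<^sub>m n n))
      ((x @\<^sub>v (transpose_mat A *\<^sub>v x) @\<^sub>v (transpose_mat B *\<^sub>v x)) @\<^sub>v w)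
    = quad_form X x - \<alpha> * quad_form \<Psi> (x @\<^sub>v (transpose_mat A *\<^sub>v x) @\<^sub>v (transpose_mat B *\<^sub>v x))
      + 2 * (x \<bullet> ((A * R + B * L) *\<^sub>v w)) + quad_form Z w"
proof -
  let ?v = "(transpose_mat A *\<^sub>v x) @\<^sub>v (transpose_mat B *\<^sub>v x)"
  let ?u = "x @\<^sub>v ?v"
  let ?TL = "four_block_mat X (0\<^sub>m n (n + m)) (0\<^sub>m (n + m) n) (0\<^sub>m (n + m) (n + m))"
  let ?Col = "0\<^sub>m n n @\<^sub>r R @\<^sub>r L"
  have v: "?v \<in> carrier_vec (n + m)" using A B x by auto
  have dim: "2 * n + m = n + (n + m)" by simp
  have u: "?u \<in> carrier_vec (2 * n + m)" unfolding dim using x v by auto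
  have TL: "?TL \<in> carrier_mat (2 * n + m) (2 * n + m)" unfolding dim using X by auto
  have Col: "?Col \<in> carrier_mat (2 * n + m) n" unfolding dim using R L by auto
  have "quad_form ?TL ?u = quad_form X x"
    using quad_form_four_block_mat[OF X zero_carrier_mat zero_carrier_mat x v] x v by simp
  moreover have "?u \<bullet> (?Col *\<^sub>v w) = x \<bullet> ((A * R + B * L) *\<^sub>v w)"
  proof -
    have "?Col *\<^sub>v w = 0\<^sub>v n @\<^sub>v (R *\<^sub>v w) @\<^sub>v (L *\<^sub>v w)"
      using R L w by (simp add: mat_mult_append[of _ n n _ "n + m"] mat_mult_append[of _ n n _ m])
    then have "?u \<bullet> (?Col *\<^sub>v w) = (transpose_mat A *\<^sub>v x) \<bullet> (R *\<^sub>v w) + (transpose_mat B *\<^sub>v x) \<bullet> (L *\<^sub>v w)"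
      using x A B R L w by (simp add: scalar_prod_append[of x n _ "n + m"] scalar_prod_append[of _ n _ m])
    also have "\<dots> = x \<bullet> (A *\<^sub>v (R *\<^sub>v w)) + x \<bullet> (B *\<^sub>v (L *\<^sub>v w))"
      using transpose_vec_mult_scalar[OF A _ x, of "R *\<^sub>v w"] transpose_vec_mult_scalar[OF B _ x, of "L *\<^sub>v w"] R L w
      by simp
    also have "\<dots> = x \<bullet> ((A * R + B * L) *\<^sub>v w)"
      using A B R L w x by (simp add: add_mult_distrib_mat_vec[of _ n n] scalar_prod_add_distrib[of _ n])
    finally show ?thesis .
  qed
  ultimately have Big: "quad_form (four_block_mat ?TL ?Col (transpose_mat ?Col) Z) (?u @\<^sub>v w)
      = quad_form X x + 2 * (x \<bullet> ((A * R + B * L) *\<^sub>v w)) + quad_form Z w"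
    using quad_form_four_block_mat[OF TL Col Z u w] by simp
  have PsiBig: "quad_form (four_block_mat \<Psi> (0\<^sub>m (2 * n + m) n) (0\<^sub>m n (2 * n + m)) (0\<^sub>m n n)) (?u @\<^sub>v w)
      = quad_form \<Psi> ?u"
    using quad_form_four_block_mat[OF \<Psi> zero_carrier_mat zero_carrier_mat u w] u w by simp
  show ?thesis
    using quad_form_diff_smult[OF four_block_carrier_mat[OF TL Z] four_block_carrier_mat[OF \<Psi> zero_carrier_mat]
        append_carrier_vec[OF u w]] Big PsiBig
    by simp
qed

context
  fixes n m q k z :: nat and C D E \<Psi> S P Q R L :: "real mat" and \<S> :: "real mat set"
    and \<alpha> \<beta> \<gamma> :: real
  assumes feas: "sdp_feasible n m q k C D E \<Psi> \<S> S P Q R L \<alpha> \<beta> \<gamma>"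
    and \<Psi>: "\<Psi> \<in> carrier_mat (2 * n + m) (2 * n + m)"
    and C: "C \<in> carrier_mat q n" and D: "D \<in> carrier_mat q m" and E: "E \<in> carrier_mat n z"
    and L: "L \<in> carrier_mat m n"
begin

lemma sdp_feasible_state_ineq:
  assumes AB: "(A, B) \<in> Sigma_D n m \<Psi>" and x: "x \<in> carrier_vec n" and w: "w \<in> carrier_vec n"
  shows "(transpose_mat E *\<^sub>v x) \<bullet> (transpose_mat E *\<^sub>v x) + \<beta> * (x \<bullet> x)
    \<le> quad_form P x + 2 * (x \<bullet> ((A * R + B * L) *\<^sub>v w)) + quad_form (R + transpose_mat R - P) w"
proof -
  let ?u = "x @\<^sub>v (transpose_mat A *\<^sub>v x) @\<^sub>v (transpose_mat B *\<^sub>v x)"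
  have P: "P \<in> carrier_mat n n" and R: "R \<in> carrier_mat n n" and "0 \<le> \<alpha>"
    using sdp_feasibleD[OF feas] unfolding sym_mat_def Upsilon_def by auto
  have A: "A \<in> carrier_mat n n" and B: "B \<in> carrier_mat n m"
    using AB unfolding Sigma_D_def by auto
  have X: "P - E * transpose_mat E - \<beta> \<cdot>\<^sub>m 1\<^sub>m n \<in> carrier_mat n n" and Z: "R + transpose_mat R - P \<in> carrier_mat n n"
    using P E R by auto
  have dim: "3 * n + m = n + (n + m) + n" by simp
  have "?u @\<^sub>v w \<in> carrier_vec (3 * n + m)" unfolding dim using A B x w by auto
  then have "0 \<le> quad_form (P - E * transpose_mat E - \<beta> \<cdot>\<^sub>m 1\<^sub>m n) x - \<alpha> * quad_form \<Psi> ?u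
      + 2 * (x \<bullet> ((A * R + B * L) *\<^sub>v w)) + quad_form (R + transpose_mat R - P) w"
    using feas quad_form_state_lmi[OF X \<Psi> R L Z A B x w, of \<alpha>]
    unfolding sdp_feasible_def Let_def psd_def by auto
  moreover have "0 \<le> \<alpha> * quad_form \<Psi> ?u"
    using Sigma_D_quad_form_nonneg[OF AB \<Psi> x] \<open>0 \<le> \<alpha>\<close> by simp
  ultimately show ?thesis
    using quad_form_minus_gram[OF P E x, of \<beta>] by linarith
qed

lemma sdp_feasible_output_ineq:
  assumes y: "y \<in> carrier_vec q" and w: "w \<in> carrier_vec n"
  shows "0 \<le> quad_form Q y + 2 * (y \<bullet> ((C * R + D * L) *\<^sub>v w)) + quad_form (R + transpose_mat R - P) w"
proof -
  have P: "P \<in> carrier_mat n n" and Q: "Q \<in> carrier_mat q q" and R: "R \<in> carrier_mat n n"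
    using sdp_feasibleD[OF feas] unfolding sym_mat_def Upsilon_def by auto
  have CL: "C * R + D * L \<in> carrier_mat q n" and Z: "R + transpose_mat R - P \<in> carrier_mat n n"
    using C D L P R by auto
  show ?thesis
    using feas quad_form_four_block_mat[OF Q CL Z y w] append_carrier_vec[OF y w]
    unfolding sdp_feasible_def Let_def psd_def by auto
qed

lemma sdp_feasible_pos_def:
  assumes AB: "(A, B) \<in> Sigma_D n m \<Psi>" and x: "x \<in> carrier_vec n" "x \<noteq> 0\<^sub>v n"
  shows "0 < quad_form P x"
proof -
  have R: "R \<in> carrier_mat n n" and P: "P \<in> carrier_mat n n" and "0 < \<beta>"
    using sdp_feasibleD[OF feas] unfolding sym_mat_def Upsilon_def by auto
  have "0 \<le> (transpose_mat E *\<^sub>v x) \<bullet> (transpose_mat E *\<^sub>v x)"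
    using conjugate_square_ge_0_vec[of "transpose_mat E *\<^sub>v x"] by simp
  moreover have "0 < \<beta> * (x \<bullet> x)"
    using \<open>0 < \<beta>\<close> conjugate_square_greater_0_vec[OF x(1)] x(2) by simp
  moreover have "A * R + B * L \<in> carrier_mat n n" "R + transpose_mat R - P \<in> carrier_mat n n"
    using AB R L P unfolding Sigma_D_def by auto
  then have "(transpose_mat E *\<^sub>v x) \<bullet> (transpose_mat E *\<^sub>v x) + \<beta> * (x \<bullet> x) \<le> quad_form P x"
    using sdp_feasible_state_ineq[OF AB x(1) zero_carrier_vec] R P x by simp
  ultimately show ?thesis by linarith
qed

lemma sdp_feasible_psd:
  assumes AB: "(A, B) \<in> Sigma_D n m \<Psi>"
  shows "psd n P"
proof -
  have P: "P \<in> carrier_mat n n" "transpose_mat P = P"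
    using sdp_feasibleD(1)[OF feas] unfolding sym_mat_def by auto
  have "0 \<le> quad_form P v" if v: "v \<in> carrier_vec n" for v
  proof (cases "v = 0\<^sub>v n")
    case True
    then show ?thesis using P by simp
  next
    case False
    then show ?thesis using sdp_feasible_pos_def[OF AB v] by simp
  qed
  then show ?thesis using P unfolding psd_def sym_mat_def by blast
qed

lemma sdp_feasible_mat_inverse:
  assumes AB: "(A, B) \<in> Sigma_D n m \<Psi>"
  obtains Ri where "mat_inverse R = Some Ri" "R * Ri = 1\<^sub>m n" "Ri * R = 1\<^sub>m n" "Ri \<in> carrier_mat n n"
proof -
  have P: "P \<in> carrier_mat n n" and R: "R \<in> carrier_mat n n"
    using sdp_feasibleD[OF feas] unfolding sym_mat_def Upsilon_def by auto
  have "v = 0\<^sub>v n" if v: "v \<in> carrier_vec n" and Rv: "R *\<^sub>v v = 0\<^sub>v n" for v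
  proof -
    have "A * R + B * L \<in> carrier_mat n n"
      using AB R L unfolding Sigma_D_def by auto
    then have "0 \<le> quad_form (R + transpose_mat R - P) v"
      using sdp_feasible_state_ineq[OF AB zero_carrier_vec v] E P v by simp
    also have "quad_form (R + transpose_mat R - P) v = - quad_form P v"
    proof -
      have "v \<bullet> (transpose_mat R *\<^sub>v v) = (R *\<^sub>v v) \<bullet> v"
        using transpose_vec_mult_scalar[of "transpose_mat R" n n v v] R v by simp
      then show ?thesis
        using R P v Rv by (simp add: add_mult_distrib_mat_vec[of _ n n] minus_mult_distrib_mat_vec[of _ n n]
            scalar_prod_add_distrib[of _ n] scalar_prod_minus_distrib[of _ n])
    qed
    finally show "v = 0\<^sub>v n"
      using sdp_feasible_pos_def[OF AB v] by fastforce
  qed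
  then show ?thesis
    using mat_inverse_of_trivial_kernel[OF R] that by blast
qed

lemma sdp_feasible_h2_suboptimal:
  assumes AB: "(A, B) \<in> Sigma_D n m \<Psi>"
    and Ri: "Ri \<in> carrier_mat n n" "R * Ri = 1\<^sub>m n" "Ri * R = 1\<^sub>m n"
  shows "h2_suboptimal A B C D E (L * Ri) \<gamma>"
proof -
  define K where "K = L * Ri"
  have R: "R \<in> carrier_mat n n" and Q: "Q \<in> carrier_mat q q" and trace: "trace_mat Q \<le> \<gamma>\<^sup>2"
    and "0 < \<beta>" "0 \<le> \<gamma>"
    using sdp_feasibleD[OF feas] unfolding sym_mat_def Upsilon_def by auto
  have P: "psd n P" by (rule sdp_feasible_psd[OF AB])
  have A: "A \<in> carrier_mat n n" and B: "B \<in> carrier_mat n m"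
    using AB unfolding Sigma_D_def by auto
  have K: "K \<in> carrier_mat m n" and KR: "K * R = L"
    unfolding K_def using L Ri R by (auto simp: assoc_mult_mat[of _ m n _ n _ n])
  have G: "A + B * K \<in> carrier_mat n n" and GR: "(A + B * K) * R = A * R + B * L"
    using A B K R KR by (auto simp: add_mult_distrib_mat[of _ n n] assoc_mult_mat[of _ n m _ n _ n])
  have Ck: "C + D * K \<in> carrier_mat q n" and CkR: "(C + D * K) * R = C * R + D * L"
    using C D K R KR by (auto simp: add_mult_distrib_mat[of _ q n] assoc_mult_mat[of _ q m _ n _ n])
  have lyap: "quad_form P (transpose_mat (A + B * K) *\<^sub>v x) + (transpose_mat E *\<^sub>v x) \<bullet> (transpose_mat E *\<^sub>v x)
      \<le> quad_form P x" if x: "x \<in> carrier_vec n" for x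
  proof -
    let ?c = "quad_form P x - (transpose_mat E *\<^sub>v x) \<bullet> (transpose_mat E *\<^sub>v x) - \<beta> * (x \<bullet> x)"
    have "0 \<le> ?c + 2 * (x \<bullet> (((A + B * K) * R) *\<^sub>v w)) + quad_form (R + transpose_mat R - P) w"
      if "w \<in> carrier_vec n" for w
      using sdp_feasible_state_ineq[OF AB x that] unfolding GR by linarith
    then have "quad_form P (transpose_mat (A + B * K) *\<^sub>v x) \<le> ?c"
      by (rule quad_form_le_of_dilation[OF P R Ri(1,2) G x])
    moreover have "0 \<le> \<beta> * (x \<bullet> x)"
      using \<open>0 < \<beta>\<close> conjugate_square_ge_0_vec[of x] by simp
    ultimately show ?thesis by linarith
  qed
  have out: "quad_form P (transpose_mat (C + D * K) *\<^sub>v y) \<le> quad_form Q y" if y: "y \<in> carrier_vec q" for y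
    using sdp_feasible_output_ineq[OF y] unfolding CkR[symmetric]
    by (rule quad_form_le_of_dilation[OF P R Ri(1,2) Ck y])
  have "(\<Sum>t<N. frob_sq (markov A B C D E K t)) \<le> trace_mat Q" for N
    unfolding markov_def using lyap out by (rule markov_partial_sum_le_trace[OF P G E Ck Q])
  then have "(\<Sum>t<N. frob_sq (markov A B C D E K t)) \<le> \<gamma>\<^sup>2" for N
    using trace order_trans by blast
  then show ?thesis
    unfolding K_def using \<open>0 \<le> \<gamma>\<close> by (rule h2_suboptimal_of_partial_sums_le)
qed

end

section \<open>The controller lies in the subspace\<close>

definition mat_comb :: "nat \<Rightarrow> (nat \<Rightarrow> real mat) \<Rightarrow> nat \<Rightarrow> nat \<Rightarrow> real vec \<Rightarrow> real mat" where
  "mat_comb k Ss m n d = mat m n (\<lambda>(i, j). \<Sum>l<k. d $ l * Ss l $$ (i, j))"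

lemma dim_mat_comb[simp]: "dim_row (mat_comb k Ss m n d) = m" "dim_col (mat_comb k Ss m n d) = n"
  unfolding mat_comb_def by simp_all

lemma mat_comb_carrier[simp]: "mat_comb k Ss m n d \<in> carrier_mat m n"
  unfolding mat_comb_def by simp

lemma mat_span_eq_mat_comb_image: "mat_span k Ss m n = mat_comb k Ss m n ` carrier_vec k"
proof (intro equalityI subsetI)
  fix M assume "M \<in> mat_span k Ss m n"
  then obtain c where "M = mat m n (\<lambda>(i, j). \<Sum>l<k. c l * Ss l $$ (i, j))"
    unfolding mat_span_def by auto
  then have "M = mat_comb k Ss m n (vec k c)"
    unfolding mat_comb_def by (intro eq_matI) auto
  then show "M \<in> mat_comb k Ss m n ` carrier_vec k" by auto
next
  fix M assume "M \<in> mat_comb k Ss m n ` carrier_vec k"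
  then show "M \<in> mat_span k Ss m n"
    unfolding mat_span_def mat_comb_def by auto
qed

lemma mat_lin_indepD:
  assumes "mat_lin_indep k Ss m n" "d \<in> carrier_vec k" "mat_comb k Ss m n d = 0\<^sub>m m n"
  shows "d = 0\<^sub>v k"
  using assms unfolding mat_lin_indep_def mat_comb_def by (intro eq_vecI) auto

lemma sum_lessThan_mult_split:
  fixes g :: "nat \<Rightarrow> 'a :: comm_monoid_add"
  shows "(\<Sum>b<n * k. g b) = (\<Sum>i<k. \<Sum>r<n. g (i * n + r))"
proof -
  have "(\<Sum>b<n * k. g b) = (\<Sum>i<k. sum g {i * n..<i * n + n})"
    using sum.nat_group[of g n k] by (simp add: mult.commute)
  also have "\<dots> = (\<Sum>i<k. \<Sum>r<n. g (i * n + r))"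
  proof (rule sum.cong[OF refl])
    fix i
    show "sum g {i * n..<i * n + n} = (\<Sum>r<n. g (i * n + r))"
      using sum.atLeastLessThan_shift_0[of g "i * n" "i * n + n"] by (simp add: atLeast0LessThan comp_def)
  qed
  finally show ?thesis .
qed

lemma block_index_less:
  fixes i k r n :: nat
  assumes "i < k" "r < n"
  shows "i * n + r < k * n"
proof -
  have "i * n + r < (i + 1) * n" using assms by simp
  also have "\<dots> \<le> k * n" using assms by (intro mult_le_mono1) auto
  finally show ?thesis .
qed

lemma rep_mat_mult_index:
  assumes "M \<in> carrier_mat (n * k) c" "a < m" "b < c"
  shows "(rep_mat k Ss m n * M) $$ (a, b) = (\<Sum>i<k. \<Sum>r<n. Ss i $$ (a, r) * M $$ (i * n + r, b))"
proof -
  have "(rep_mat k Ss m n * M) $$ (a, b) = (\<Sum>x<n * k. rep_mat k Ss m n $$ (a, x) * M $$ (x, b))"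
    using assms unfolding rep_mat_def by (simp add: scalar_prod_def atLeast0LessThan)
  also have "\<dots> = (\<Sum>i<k. \<Sum>r<n. Ss i $$ (a, r) * M $$ (i * n + r, b))"
    unfolding sum_lessThan_mult_split using assms block_index_less
    by (intro sum.cong refl) (auto simp: rep_mat_def mult.commute)
  finally show ?thesis .
qed

lemma kron_index:
  assumes "i < dim_row A" "j < dim_col A" "r < dim_row B" "s < dim_col B"
  shows "kron A B $$ (i * dim_row B + r, j * dim_col B + s) = A $$ (i, j) * B $$ (r, s)"
  using assms block_index_less[of i "dim_row A" r "dim_row B"] block_index_less[of j "dim_col A" s "dim_col B"]
  unfolding kron_def by simp

lemma Upsilon_rep_mat_mult:
  assumes Ss: "\<And>l. l < k \<Longrightarrow> Ss l \<in> carrier_mat m n" and R: "R \<in> Upsilon k n (rep_mat k Ss m n)"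
  obtains \<Lambda> where "\<Lambda> \<in> carrier_mat k k" "\<And>j. j < k \<Longrightarrow> Ss j * R = mat_comb k Ss m n (col \<Lambda> j)"
proof -
  from R obtain \<Lambda> where Rc: "R \<in> carrier_mat n n" and "sym_mat k \<Lambda>"
    and eq: "rep_mat k Ss m n * kron (1\<^sub>m k) R = rep_mat k Ss m n * kron \<Lambda> (1\<^sub>m n)"
    unfolding Upsilon_def by auto
  then have \<Lambda>: "\<Lambda> \<in> carrier_mat k k" unfolding sym_mat_def by auto
  have "Ss j * R = mat_comb k Ss m n (col \<Lambda> j)" if j: "j < k" for j
  proof (rule eq_matI)
    fix a s assume "a < dim_row (mat_comb k Ss m n (col \<Lambda> j))" "s < dim_col (mat_comb k Ss m n (col \<Lambda> j))"
    then have a: "a < m" and s: "s < n" by simp_all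
    have col: "j * n + s < n * k" using block_index_less[OF j s] by (simp add: mult.commute)
    have K1: "kron (1\<^sub>m k) R \<in> carrier_mat (n * k) (n * k)" and K2: "kron \<Lambda> (1\<^sub>m n) \<in> carrier_mat (n * k) (n * k)"
      using Rc \<Lambda> unfolding kron_def by (auto simp: mult.commute)
    have "(rep_mat k Ss m n * kron (1\<^sub>m k) R) $$ (a, j * n + s)
        = (\<Sum>i<k. if i = j then \<Sum>r<n. Ss j $$ (a, r) * R $$ (r, s) else 0)"
      unfolding rep_mat_mult_index[OF K1 a col] using kron_index[of _ "1\<^sub>m k" j _ R s] Rc j s
      by (intro sum.cong refl) auto
    also have "\<dots> = (Ss j * R) $$ (a, s)"
      using Ss[OF j] Rc a s j by (simp add: scalar_prod_def atLeast0LessThan)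
    finally have lhs: "(rep_mat k Ss m n * kron (1\<^sub>m k) R) $$ (a, j * n + s) = (Ss j * R) $$ (a, s)" .
    have "(rep_mat k Ss m n * kron \<Lambda> (1\<^sub>m n)) $$ (a, j * n + s)
        = (\<Sum>i<k. \<Sum>r<n. if r = s then col \<Lambda> j $ i * Ss i $$ (a, s) else 0)"
      unfolding rep_mat_mult_index[OF K2 a col] using kron_index[of _ \<Lambda> j _ "1\<^sub>m n" s] \<Lambda> j s
      by (intro sum.cong refl) auto
    also have "\<dots> = mat_comb k Ss m n (col \<Lambda> j) $$ (a, s)"
      using a s unfolding mat_comb_def by simp
    finally show "(Ss j * R) $$ (a, s) = mat_comb k Ss m n (col \<Lambda> j) $$ (a, s)"
      using lhs eq by simp
  qed (use Ss[OF j] Rc in auto)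
  with \<Lambda> that show ?thesis by blast
qed

lemma mat_comb_mult:
  assumes Ss: "\<And>l. l < k \<Longrightarrow> Ss l \<in> carrier_mat m n" and R: "R \<in> carrier_mat n n"
    and \<Lambda>: "\<Lambda> \<in> carrier_mat k k" and basis_mult: "\<And>j. j < k \<Longrightarrow> Ss j * R = mat_comb k Ss m n (col \<Lambda> j)"
    and d: "d \<in> carrier_vec k"
  shows "mat_comb k Ss m n d * R = mat_comb k Ss m n (\<Lambda> *\<^sub>v d)"
proof (rule eq_matI)
  fix a s assume "a < dim_row (mat_comb k Ss m n (\<Lambda> *\<^sub>v d))" "s < dim_col (mat_comb k Ss m n (\<Lambda> *\<^sub>v d))"
  then have a: "a < m" and s: "s < n" by simp_all
  have "(mat_comb k Ss m n d * R) $$ (a, s) = (\<Sum>r<n. mat_comb k Ss m n d $$ (a, r) * R $$ (r, s))"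
    using a s R by (simp add: scalar_prod_def atLeast0LessThan)
  also have "\<dots> = (\<Sum>r<n. \<Sum>l<k. d $ l * (Ss l $$ (a, r) * R $$ (r, s)))"
    using a unfolding mat_comb_def by (simp add: sum_distrib_right mult.assoc)
  also have "\<dots> = (\<Sum>l<k. d $ l * (\<Sum>r<n. Ss l $$ (a, r) * R $$ (r, s)))"
    by (subst sum.swap) (simp add: sum_distrib_left)
  also have "\<dots> = (\<Sum>l<k. d $ l * (\<Sum>i<k. \<Lambda> $$ (i, l) * Ss i $$ (a, s)))"
  proof (rule sum.cong[OF refl])
    fix l assume "l \<in> {..<k}"
    then have "(\<Sum>r<n. Ss l $$ (a, r) * R $$ (r, s)) = (Ss l * R) $$ (a, s)"
      using Ss[of l] R a s by (simp add: scalar_prod_def atLeast0LessThan)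
    also have "\<dots> = mat_comb k Ss m n (col \<Lambda> l) $$ (a, s)"
      using basis_mult \<open>l \<in> {..<k}\<close> by simp
    finally have "(\<Sum>r<n. Ss l $$ (a, r) * R $$ (r, s)) = mat_comb k Ss m n (col \<Lambda> l) $$ (a, s)" .
    then show "d $ l * (\<Sum>r<n. Ss l $$ (a, r) * R $$ (r, s)) = d $ l * (\<Sum>i<k. \<Lambda> $$ (i, l) * Ss i $$ (a, s))"
      using \<open>l \<in> {..<k}\<close> \<Lambda> a s unfolding mat_comb_def by simp
  qed
  also have "\<dots> = (\<Sum>i<k. \<Sum>l<k. d $ l * (\<Lambda> $$ (i, l) * Ss i $$ (a, s)))"
    by (subst sum.swap) (simp add: sum_distrib_left)
  also have "\<dots> = (\<Sum>i<k. (\<Sum>l<k. \<Lambda> $$ (i, l) * d $ l) * Ss i $$ (a, s))"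
    by (intro sum.cong refl) (simp add: sum_distrib_left sum_distrib_right mult_ac)
  also have "\<dots> = mat_comb k Ss m n (\<Lambda> *\<^sub>v d) $$ (a, s)"
    using a s \<Lambda> d unfolding mat_comb_def by (simp add: scalar_prod_def atLeast0LessThan)
  finally show "(mat_comb k Ss m n d * R) $$ (a, s) = mat_comb k Ss m n (\<Lambda> *\<^sub>v d) $$ (a, s)" .
qed (use R in simp_all)

text \<open>In the coordinates of the basis, right multiplication by R acts on the span as \<Lambda>.
  It is injective since R is invertible and the basis independent, so \<Lambda> is invertible and
  every element of the span is of the form M * R with M in the span.\<close>
lemma mat_span_mult_inverse:
  assumes basis: "is_basis_of k Ss m n \<S>" and R: "R \<in> Upsilon k n (rep_mat k Ss m n)"
    and Ri: "Ri \<in> carrier_mat n n" "R * Ri = 1\<^sub>m n" and L: "L \<in> \<S>"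
  shows "L * Ri \<in> \<S>"
proof -
  have Ss: "\<And>l. l < k \<Longrightarrow> Ss l \<in> carrier_mat m n" and indep: "mat_lin_indep k Ss m n"
    and span: "\<S> = mat_comb k Ss m n ` carrier_vec k"
    using basis unfolding is_basis_of_def mat_span_eq_mat_comb_image by auto
  have Rc: "R \<in> carrier_mat n n" using R unfolding Upsilon_def by auto
  obtain \<Lambda> where \<Lambda>: "\<Lambda> \<in> carrier_mat k k" and basis_mult: "\<And>j. j < k \<Longrightarrow> Ss j * R = mat_comb k Ss m n (col \<Lambda> j)"
    using Upsilon_rep_mat_mult[OF Ss R] by blast
  have comb_mult: "mat_comb k Ss m n d * R = mat_comb k Ss m n (\<Lambda> *\<^sub>v d)" if "d \<in> carrier_vec k" for d
    using mat_comb_mult[OF _ Rc \<Lambda> _ that] Ss basis_mult by blast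
  have cancel: "mat_comb k Ss m n d * R * Ri = mat_comb k Ss m n d" for d
    using Rc Ri by (simp add: assoc_mult_mat[of _ m n _ n _ n])
  have "d = 0\<^sub>v k" if d: "d \<in> carrier_vec k" and "\<Lambda> *\<^sub>v d = 0\<^sub>v k" for d
  proof (rule mat_lin_indepD[OF indep d])
    have "mat_comb k Ss m n d * R = 0\<^sub>m m n"
      using comb_mult[OF d] \<open>\<Lambda> *\<^sub>v d = 0\<^sub>v k\<close> unfolding mat_comb_def by (intro eq_matI) auto
    then show "mat_comb k Ss m n d = 0\<^sub>m m n"
      using cancel[of d] Ri by simp
  qed
  then obtain \<Lambda>i where \<Lambda>i: "\<Lambda> * \<Lambda>i = 1\<^sub>m k" "\<Lambda>i \<in> carrier_mat k k"
    using mat_inverse_of_trivial_kernel[OF \<Lambda>] by metis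
  from L span obtain c where c: "c \<in> carrier_vec k" and Lc: "L = mat_comb k Ss m n c" by auto
  have "\<Lambda> *\<^sub>v (\<Lambda>i *\<^sub>v c) = c"
    using \<Lambda> \<Lambda>i c by (simp flip: assoc_mult_mat_vec[of \<Lambda> k k \<Lambda>i k])
  then have "L = mat_comb k Ss m n (\<Lambda>i *\<^sub>v c) * R"
    using comb_mult[of "\<Lambda>i *\<^sub>v c"] \<Lambda>i c Lc by simp
  then have "L * Ri = mat_comb k Ss m n (\<Lambda>i *\<^sub>v c)"
    using cancel by simp
  then show ?thesis
    using span \<Lambda>i c by auto
qed

theorem theorem1:
  fixes n m T q z k :: nat
    and Xm Um Xp Ast Bst Wm \<Phi> \<Phi>11 \<Phi>12 \<Phi>22 C D E :: "real mat"
    and Ss :: "nat \<Rightarrow> real mat" and \<S> :: "real mat set"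
    and P Q R L :: "real mat" and \<alpha> \<beta> \<gamma>opt :: real
  assumes data: "Xm \<in> carrier_mat n T" "Um \<in> carrier_mat m T" "Xp \<in> carrier_mat n T"
    and truesys: "Ast \<in> carrier_mat n n" "Bst \<in> carrier_mat n m" "Wm \<in> carrier_mat n T"
      "Xp = Ast * Xm + Bst * Um + Wm"
    and Phi: "sym_mat (n + T) \<Phi>" "\<Phi>11 \<in> carrier_mat n n" "\<Phi>12 \<in> carrier_mat n T"
      "\<Phi>22 \<in> carrier_mat T T" "\<Phi> = four_block_mat \<Phi>11 \<Phi>12 (transpose_mat \<Phi>12) \<Phi>22"
      "psd n \<Phi>11" "neg_def T \<Phi>22"
    and noise: "psd n (append_cols (1\<^sub>m n) Wm * \<Phi> * transpose_mat (append_cols (1\<^sub>m n) Wm))"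
    and CDE: "C \<in> carrier_mat q n" "D \<in> carrier_mat q m" "E \<in> carrier_mat n z"
    and basis: "is_basis_of k Ss m n \<S>"
    and feas: "sdp_feasible n m q k C D E (Psi_mat n m T Xp Xm Um \<Phi>) \<S> (rep_mat k Ss m n)
                 P Q R L \<alpha> \<beta> \<gamma>opt"
    and opt: "\<And>P' Q' R' L' \<alpha>' \<beta>' \<gamma>'.
                sdp_feasible n m q k C D E (Psi_mat n m T Xp Xm Um \<Phi>) \<S> (rep_mat k Ss m n)
                  P' Q' R' L' \<alpha>' \<beta>' \<gamma>' \<Longrightarrow> \<gamma>opt \<le> \<gamma>'"
  shows "L * the (mat_inverse R) \<in> \<S> \<and>
         (\<forall>A B. (A, B) \<in> Sigma_D n m (Psi_mat n m T Xp Xm Um \<Phi>) \<longrightarrow>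
            h2_suboptimal A B C D E (L * the (mat_inverse R)) \<gamma>opt)"
proof -
  let ?\<Psi> = "Psi_mat n m T Xp Xm Um \<Phi>"
  have \<Phi>: "\<Phi> \<in> carrier_mat (n + T) (n + T)"
    using Phi(1) unfolding sym_mat_def by auto
  have \<Psi>: "?\<Psi> \<in> carrier_mat (2 * n + m) (2 * n + m)"
    by (rule Psi_mat_carrier[OF data(3,1,2) \<Phi>])
  have L: "L \<in> carrier_mat m n"
    using sdp_feasibleD(4)[OF feas] basis unfolding is_basis_of_def mat_span_def by auto
  have "(Ast, Bst) \<in> Sigma_D n m ?\<Psi>"
    by (rule true_system_in_Sigma_D[OF data truesys \<Phi> noise])
  then obtain Ri where Ri: "mat_inverse R = Some Ri" "R * Ri = 1\<^sub>m n" "Ri * R = 1\<^sub>m n" "Ri \<in> carrier_mat n n"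
    using sdp_feasible_mat_inverse[OF feas \<Psi> CDE L] by blast
  have "L * Ri \<in> \<S>"
    using mat_span_mult_inverse[OF basis sdp_feasibleD(3)[OF feas] Ri(4,2) sdp_feasibleD(4)[OF feas]] .
  moreover have "h2_suboptimal A B C D E (L * Ri) \<gamma>opt" if "(A, B) \<in> Sigma_D n m ?\<Psi>" for A B
    using sdp_feasible_h2_suboptimal[OF feas \<Psi> CDE L that Ri(4,2,3)] .
  ultimately show ?thesis
    using Ri(1) by simp
qed

end
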